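(* Every monoid that can be embedded into a sofic group is strongly sofic.
   Context: Hamming metric on $\operatorname{Map}(D)$ (monoid of maps $D\to D$, $D$ finite non-empty): $d_D^{\mathrm{Ham}}(f,g)=\frac{1}{|D|}|\{v:f(v)\ne g(v)\}|$. A group $G$ is sofic if for every finite $K\subset G$ and $\varepsilon>0$ there are a non-empty finite set $D$ and a map $\sigma\colon G\to\mathrm{Sym}(D)$ with $\sigma(1_G)=\mathrm{Id}_D$, $d_D^{\mathrm{Ham}}(\sigma(k_1k_2),\sigma(k_1)\sigma(k_2))\le\varepsilon$ for $k_1,k_2\in K$, and $d_D^{\mathrm{Ham}}(\sigma(k_1),\sigma(k_2))\ge1-\varepsilon$ for distinct $k_1,k_2\in K$. A monoid $M$ is strongly sofic if for every finite $K\subset M$ there is an integer $\Delta_K\ge1$ such that for every $\varepsilon>0$ there exist a non-empty finite set $D$ and a map $\sigma\colon M\to\operatorname{Map}(D)$ with (1) $\sigma(1_M)=\mathrm{Id}_D$; (2) $d_D^{\mathrm{Ham}}(\sigma(k_1k_2),\sigma(k_1)\sigma(k_2))\le\varepsilon$ for $k_1,k_2\in K$; (3) $d_D^{\mathrm{Ham}}(\sigma(k_1),\sigma(k_2))\ge1-\varepsilon$ for distinct $k_1,k_2\in K$; (4) $|\sigma(k)^{-1}(v)|\le\Delta_K$ for $k\in K$, $v\in D$. A monoid embeds into a group if there is an injective monoid morphism into it. *)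

theory Defs
  imports Complex_Main "HOL-Algebra.Group"
begin

text \<open>Finite sets D are taken as finite subsets of nat (every finite set is in bijection with one).
  Elements of Map(D) are represented by functions nat => nat mapping D into D; only values on D matter.\<close>

definition ham :: "nat set \<Rightarrow> (nat \<Rightarrow> nat) \<Rightarrow> (nat \<Rightarrow> nat) \<Rightarrow> real" where
  "ham D f g = real (card {v \<in> D. f v \<noteq> g v}) / real (card D)"

definition sofic_group :: "('b, 'd) monoid_scheme \<Rightarrow> bool" where
  "sofic_group G \<longleftrightarrow>
    (\<forall>K \<epsilon>. K \<subseteq> carrier G \<and> finite K \<and> \<epsilon> > (0::real) \<longrightarrow>
      (\<exists>(D::nat set) (\<sigma>::'b \<Rightarrow> nat \<Rightarrow> nat).
         finite D \<and> D \<noteq> {} \<and>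
         (\<forall>g\<in>carrier G. bij_betw (\<sigma> g) D D) \<and>
         (\<forall>v\<in>D. \<sigma> \<one>\<^bsub>G\<^esub> v = v) \<and>
         (\<forall>k1\<in>K. \<forall>k2\<in>K. ham D (\<sigma> (k1 \<otimes>\<^bsub>G\<^esub> k2)) (\<sigma> k1 \<circ> \<sigma> k2) \<le> \<epsilon>) \<and>
         (\<forall>k1\<in>K. \<forall>k2\<in>K. k1 \<noteq> k2 \<longrightarrow> ham D (\<sigma> k1) (\<sigma> k2) \<ge> 1 - \<epsilon>)))"

definition strongly_sofic :: "('a, 'c) monoid_scheme \<Rightarrow> bool" where
  "strongly_sofic M \<longleftrightarrow>
    (\<forall>K. K \<subseteq> carrier M \<and> finite K \<longrightarrow>
      (\<exists>\<Delta>::nat. \<Delta> \<ge> 1 \<and>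
        (\<forall>\<epsilon>::real. \<epsilon> > 0 \<longrightarrow>
          (\<exists>(D::nat set) (\<sigma>::'a \<Rightarrow> nat \<Rightarrow> nat).
             finite D \<and> D \<noteq> {} \<and>
             (\<forall>m\<in>carrier M. \<sigma> m ` D \<subseteq> D) \<and>
             (\<forall>v\<in>D. \<sigma> \<one>\<^bsub>M\<^esub> v = v) \<and>
             (\<forall>k1\<in>K. \<forall>k2\<in>K. ham D (\<sigma> (k1 \<otimes>\<^bsub>M\<^esub> k2)) (\<sigma> k1 \<circ> \<sigma> k2) \<le> \<epsilon>) \<and>
             (\<forall>k1\<in>K. \<forall>k2\<in>K. k1 \<noteq> k2 \<longrightarrow> ham D (\<sigma> k1) (\<sigma> k2) \<ge> 1 - \<epsilon>) \<and>
             (\<forall>k\<in>K. \<forall>v\<in>D. card {u \<in> D. \<sigma> k u = v} \<le> \<Delta>)))))"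

end

theory Submission
  imports Defs
begin

text \<open>A sofic approximation of the group G, restricted along an injective homomorphism
  h: M \<rightarrow> G, is a sofic approximation of M; its maps are permutations of D,
  so every fibre has at most one element and the degree bound holds with \<Delta> = 1.\<close>

definition sofic_approx ::
    "('b, 'd) monoid_scheme \<Rightarrow> 'b set \<Rightarrow> real \<Rightarrow> nat set \<Rightarrow> ('b \<Rightarrow> nat \<Rightarrow> nat) \<Rightarrow> bool" where
  "sofic_approx G K \<epsilon> D \<sigma> \<longleftrightarrow>
     finite D \<and> D \<noteq> {} \<and>
     (\<forall>g\<in>carrier G. bij_betw (\<sigma> g) D D) \<and>
     (\<forall>v\<in>D. \<sigma> \<one>\<^bsub>G\<^esub> v = v) \<and>
     (\<forall>k1\<in>K. \<forall>k2\<in>K. ham D (\<sigma> (k1 \<otimes>\<^bsub>G\<^esub> k2)) (\<sigma> k1 \<circ> \<sigma> k2) \<le> \<epsilon>) \<and>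
     (\<forall>k1\<in>K. \<forall>k2\<in>K. k1 \<noteq> k2 \<longrightarrow> ham D (\<sigma> k1) (\<sigma> k2) \<ge> 1 - \<epsilon>)"

definition strongly_sofic_approx ::
    "('a, 'c) monoid_scheme \<Rightarrow> 'a set \<Rightarrow> nat \<Rightarrow> real \<Rightarrow> nat set \<Rightarrow> ('a \<Rightarrow> nat \<Rightarrow> nat) \<Rightarrow> bool" where
  "strongly_sofic_approx M K \<Delta> \<epsilon> D \<sigma> \<longleftrightarrow>
     finite D \<and> D \<noteq> {} \<and>
     (\<forall>m\<in>carrier M. \<sigma> m ` D \<subseteq> D) \<and>
     (\<forall>v\<in>D. \<sigma> \<one>\<^bsub>M\<^esub> v = v) \<and>
     (\<forall>k1\<in>K. \<forall>k2\<in>K. ham D (\<sigma> (k1 \<otimes>\<^bsub>M\<^esub> k2)) (\<sigma> k1 \<circ> \<sigma> k2) \<le> \<epsilon>) \<and>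
     (\<forall>k1\<in>K. \<forall>k2\<in>K. k1 \<noteq> k2 \<longrightarrow> ham D (\<sigma> k1) (\<sigma> k2) \<ge> 1 - \<epsilon>) \<and>
     (\<forall>k\<in>K. \<forall>v\<in>D. card {u \<in> D. \<sigma> k u = v} \<le> \<Delta>)"

lemma sofic_group_iff_sofic_approx:
  "sofic_group G \<longleftrightarrow>
     (\<forall>K \<epsilon>. K \<subseteq> carrier G \<and> finite K \<and> \<epsilon> > 0 \<longrightarrow> (\<exists>D \<sigma>. sofic_approx G K \<epsilon> D \<sigma>))"
  unfolding sofic_group_def sofic_approx_def by blast

lemma strongly_sofic_iff_strongly_sofic_approx:
  "strongly_sofic M \<longleftrightarrow>
     (\<forall>K. K \<subseteq> carrier M \<and> finite K \<longrightarrow>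
        (\<exists>\<Delta>\<ge>1. \<forall>\<epsilon>>0. \<exists>D \<sigma>. strongly_sofic_approx M K \<Delta> \<epsilon> D \<sigma>))"
  unfolding strongly_sofic_def strongly_sofic_approx_def by blast

lemma card_fiber_le_1_if_inj_on:
  assumes "inj_on f D"
  shows "card {u \<in> D. f u = v} \<le> 1"
proof -
  have "{u \<in> D. f u = v} = f -` {v} \<inter> D" by blast
  then show ?thesis using card_vimage_inj_on_le[OF assms, of "{v}"] by simp
qed

lemma strongly_sofic_approx_comp_inj_hom:
  assumes hom: "h \<in> hom M G" and one: "h \<one>\<^bsub>M\<^esub> = \<one>\<^bsub>G\<^esub>"
    and inj: "inj_on h (carrier M)" and K: "K \<subseteq> carrier M"
    and approx: "sofic_approx G (h ` K) \<epsilon> D \<sigma>"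
  shows "strongly_sofic_approx M K 1 \<epsilon> D (\<sigma> \<circ> h)"
proof -
  have bij: "bij_betw (\<sigma> (h m)) D D" if "m \<in> carrier M" for m
    using approx hom that by (auto simp: sofic_approx_def hom_def Pi_def)
  have mult: "h (k1 \<otimes>\<^bsub>M\<^esub> k2) = h k1 \<otimes>\<^bsub>G\<^esub> h k2" if "k1 \<in> K" "k2 \<in> K" for k1 k2
    using hom K that by (auto simp: hom_def)
  have distinct: "h k1 \<noteq> h k2" if "k1 \<in> K" "k2 \<in> K" "k1 \<noteq> k2" for k1 k2
    using inj K that by (auto dest: inj_onD)
  show ?thesis
    unfolding strongly_sofic_approx_def
  proof (intro conjI ballI impI)
    show "finite D" "D \<noteq> {}"
      using approx by (auto simp: sofic_approx_def)
    show "(\<sigma> \<circ> h) m ` D \<subseteq> D" if "m \<in> carrier M" for m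
      using bij[OF that] by (simp add: bij_betw_def)
    show "(\<sigma> \<circ> h) \<one>\<^bsub>M\<^esub> v = v" if "v \<in> D" for v
      using approx one that by (simp add: sofic_approx_def)
    show "ham D ((\<sigma> \<circ> h) (k1 \<otimes>\<^bsub>M\<^esub> k2)) ((\<sigma> \<circ> h) k1 \<circ> (\<sigma> \<circ> h) k2) \<le> \<epsilon>"
      if "k1 \<in> K" "k2 \<in> K" for k1 k2
      using approx that by (simp add: sofic_approx_def mult)
    show "ham D ((\<sigma> \<circ> h) k1) ((\<sigma> \<circ> h) k2) \<ge> 1 - \<epsilon>"
      if "k1 \<in> K" "k2 \<in> K" "k1 \<noteq> k2" for k1 k2
      using approx that distinct[OF that] by (simp add: sofic_approx_def)
    show "card {u \<in> D. (\<sigma> \<circ> h) k u = v} \<le> 1" if "k \<in> K" for k v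
      using card_fiber_le_1_if_inj_on[OF bij_betw_imp_inj_on[OF bij]] K that by auto
  qed
qed

theorem corollary3p5:
  fixes M :: "('a, 'c) monoid_scheme" and G :: "('b, 'd) monoid_scheme"
  assumes "monoid M" and "group G" and "sofic_group G"
    and "h \<in> hom M G" and "h \<one>\<^bsub>M\<^esub> = \<one>\<^bsub>G\<^esub>" and "inj_on h (carrier M)"
  shows "strongly_sofic M"
  unfolding strongly_sofic_iff_strongly_sofic_approx
proof (intro allI impI)
  fix K assume K: "K \<subseteq> carrier M \<and> finite K"
  have "\<exists>D \<sigma>. strongly_sofic_approx M K 1 \<epsilon> D \<sigma>" if "\<epsilon> > 0" for \<epsilon>
  proof -
    have "h ` K \<subseteq> carrier G" "finite (h ` K)"
      using assms(4) K by (auto simp: hom_def)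
    then obtain D \<sigma> where "sofic_approx G (h ` K) \<epsilon> D \<sigma>"
      using assms(3) \<open>\<epsilon> > 0\<close> by (meson sofic_group_iff_sofic_approx)
    then show ?thesis
      using strongly_sofic_approx_comp_inj_hom assms(4-6) K by blast
  qed
  then show "\<exists>\<Delta>\<ge>1. \<forall>\<epsilon>>0. \<exists>D \<sigma>. strongly_sofic_approx M K \<Delta> \<epsilon> D \<sigma>"
    by blast
qed

end
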